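(* Assume the input distribution is non-degenerate in the following sense: for every $\mathbf{w}\neq \mathbf{0}$ with $\theta(\mathbf{w},\mathbf{w}_* )<\pi$ one has $\mathbf{A}_{\mathbf{w},\mathbf{w}_*}\succ 0$, and for every $\mathbf{w}\neq\mathbf{0}$ with $\theta(\mathbf{w},\mathbf{w}_* )>0$ one has $\mathbf{A}_{\mathbf{w},-\mathbf{w}_*}\succ 0$. Let the initialization $\mathbf{w}_0$ satisfy $\ell(\mathbf{w}_0)<\ell(\mathbf{0})$, and run gradient descent $\mathbf{w}_{t+1}=\mathbf{w}_t-\eta_t\nabla\ell(\mathbf{w}_t)$ with step sizes for which $\ell(\mathbf{w}_t)$ is non-increasing. If the iterates converge to a point $\bar{\mathbf{w}}$ with $\nabla \ell(\bar{\mathbf{w}})=\mathbf{0}$, then $\bar{\mathbf{w}}=\mathbf{w}_*$. (Equivalently: every $\mathbf{w}$ with $\ell(\mathbf{w})<\ell(\mathbf{0})$ and $\nabla\ell(\mathbf{w})=\mathbf{0}$ equals $\mathbf{w}_*$.)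
   Context: One-neuron setting. $\mathbf{Z}\in\mathbb{R}^p$ is a random vector with a continuous distribution; $\sigma(x)=\max(x,0)$ (ReLU); $\mathbf{w}_*\in\mathbb{R}^p\setminus\{\mathbf{0}\}$ is a fixed unknown teacher vector. The population loss is $\ell(\mathbf{w})=\frac12\mathbb{E}[(\sigma(\mathbf{w}^\top\mathbf{Z})-\sigma(\mathbf{w}_*^\top\mathbf{Z}))^2]$. Define $\mathbf{A}_{\mathbf{w},\mathbf{w}_*}=\mathbb{E}[\mathbf{Z}\mathbf{Z}^\top\mathbb{I}\{\mathbf{w}^\top\mathbf{Z}\ge0,\mathbf{w}_*^\top\mathbf{Z}\ge0\}]$ and $\mathbf{A}_{\mathbf{w},-\mathbf{w}_*}=\mathbb{E}[\mathbf{Z}\mathbf{Z}^\top\mathbb{I}\{\mathbf{w}^\top\mathbf{Z}\ge0,\mathbf{w}_*^\top\mathbf{Z}\le0\}]$. For $\mathbf{w}\ne \mathbf{0}$ the population gradient is $\nabla\ell(\mathbf{w})=\mathbf{A}_{\mathbf{w},\mathbf{w}_*}(\mathbf{w}-\mathbf{w}_* )+\mathbf{A}_{\mathbf{w},-\mathbf{w}_*}\mathbf{w}$. $\theta(\mathbf{u},\mathbf{v})\in[0,\pi]$ denotes the angle between vectors $\mathbf{u},\mathbf{v}$. *)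

theory Defs
  imports "HOL-Probability.Probability"
begin

definition relu :: "real \<Rightarrow> real" where
  "relu x = max x 0"

definition vec_angle :: "real^'n \<Rightarrow> real^'n \<Rightarrow> real" where
  "vec_angle u v = arccos ((u \<bullet> v) / (norm u * norm v))"

definition pop_loss :: "'a measure \<Rightarrow> ('a \<Rightarrow> real^'n) \<Rightarrow> real^'n \<Rightarrow> real^'n \<Rightarrow> real" where
  "pop_loss M Z wstar w =
     (1/2) * (\<integral>\<omega>. (relu (w \<bullet> Z \<omega>) - relu (wstar \<bullet> Z \<omega>))^2 \<partial>M)"

definition A_pos :: "'a measure \<Rightarrow> ('a \<Rightarrow> real^'n) \<Rightarrow> real^'n \<Rightarrow> real^'n \<Rightarrow> real^'n^'n" where
  "A_pos M Z wstar w = (\<chi> i j. \<integral>\<omega>. Z \<omega> $ i * Z \<omega> $ j *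
       indicator {\<omega>. w \<bullet> Z \<omega> \<ge> 0 \<and> wstar \<bullet> Z \<omega> \<ge> 0} \<omega> \<partial>M)"

definition A_neg :: "'a measure \<Rightarrow> ('a \<Rightarrow> real^'n) \<Rightarrow> real^'n \<Rightarrow> real^'n \<Rightarrow> real^'n^'n" where
  "A_neg M Z wstar w = (\<chi> i j. \<integral>\<omega>. Z \<omega> $ i * Z \<omega> $ j *
       indicator {\<omega>. w \<bullet> Z \<omega> \<ge> 0 \<and> wstar \<bullet> Z \<omega> \<le> 0} \<omega> \<partial>M)"

definition pop_grad :: "'a measure \<Rightarrow> ('a \<Rightarrow> real^'n) \<Rightarrow> real^'n \<Rightarrow> real^'n \<Rightarrow> real^'n" where
  "pop_grad M Z wstar w = A_pos M Z wstar w *v (w - wstar) + A_neg M Z wstar w *v w"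

definition pos_def :: "real^'n^'n \<Rightarrow> bool" where
  "pos_def A \<longleftrightarrow> A = transpose A \<and> (\<forall>x. x \<noteq> 0 \<longrightarrow> x \<bullet> (A *v x) > 0)"

end

theory Submission
  imports Defs
begin

text \<open>Testing \<open>\<nabla>\<ell>(w) = 0\<close> against \<open>u = w - w\<^sub>*\<close> gives
  \<open>0 = u\<^sup>T A\<^sub>+ u + u\<^sup>T A\<^sub>- w\<close>. On the region of \<open>A\<^sub>-\<close> one has \<open>w\<^sub>*\<^sup>T Z \<le> 0 \<le> w\<^sup>T Z\<close>, so
  \<open>u\<^sup>T A\<^sub>- w \<ge> w\<^sup>T A\<^sub>- w\<close>; hence both quadratic forms \<open>u\<^sup>T A\<^sub>+ u\<close> and \<open>w\<^sup>T A\<^sub>- w\<close>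
  vanish at a critical point. If \<open>w \<noteq> w\<^sub>*\<close>, then either \<open>\<theta>(w, w\<^sub>*) < \<pi>\<close> (or \<open>w = 0\<close>,
  where \<open>A\<^sub>+\<close> coincides with its value at \<open>w\<^sub>*\<close>) and \<open>A\<^sub>+ \<succ> 0\<close> contradicts
  \<open>u\<^sup>T A\<^sub>+ u = 0\<close>, or \<open>\<theta>(w, w\<^sub>*) > 0\<close> and \<open>A\<^sub>- \<succ> 0\<close> contradicts \<open>w\<^sup>T A\<^sub>- w = 0\<close>.\<close>

definition second_moment_on :: "'a measure \<Rightarrow> ('a \<Rightarrow> real^'n) \<Rightarrow> 'a set \<Rightarrow> real^'n^'n" where
  "second_moment_on M Z S = (\<chi> i j. \<integral>\<omega>. Z \<omega> $ i * Z \<omega> $ j * indicator S \<omega> \<partial>M)"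

lemma A_pos_eq_second_moment_on:
  "A_pos M Z wstar w = second_moment_on M Z {\<omega>. w \<bullet> Z \<omega> \<ge> 0 \<and> wstar \<bullet> Z \<omega> \<ge> 0}"
  by (simp add: A_pos_def second_moment_on_def)

lemma A_neg_eq_second_moment_on:
  "A_neg M Z wstar w = second_moment_on M Z {\<omega>. w \<bullet> Z \<omega> \<ge> 0 \<and> wstar \<bullet> Z \<omega> \<le> 0}"
  by (simp add: A_neg_def second_moment_on_def)

lemma halfspace_intersection_sets:
  fixes Z :: "'a \<Rightarrow> real^'n"
  assumes "Z \<in> borel_measurable M"
  shows "{\<omega>\<in>space M. a \<bullet> Z \<omega> \<ge> 0 \<and> b \<bullet> Z \<omega> \<ge> 0} \<in> sets M"
    and "{\<omega>\<in>space M. a \<bullet> Z \<omega> \<ge> 0 \<and> b \<bullet> Z \<omega> \<le> 0} \<in> sets M"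
proof -
  have "(\<lambda>\<omega>. c \<bullet> Z \<omega>) \<in> borel_measurable M" for c
    using assms by (intro borel_measurable_inner) auto
  then show "{\<omega>\<in>space M. a \<bullet> Z \<omega> \<ge> 0 \<and> b \<bullet> Z \<omega> \<ge> 0} \<in> sets M"
    and "{\<omega>\<in>space M. a \<bullet> Z \<omega> \<ge> 0 \<and> b \<bullet> Z \<omega> \<le> 0} \<in> sets M"
    by (measurable, measurable)
qed

lemma integrable_component_product_indicator:
  fixes Z :: "'a \<Rightarrow> real^'n"
  assumes Z: "Z \<in> borel_measurable M" and sq: "integrable M (\<lambda>\<omega>. (norm (Z \<omega>))\<^sup>2)"
    and S: "{\<omega>\<in>space M. \<omega> \<in> S} \<in> sets M"
  shows "integrable M (\<lambda>\<omega>. Z \<omega> $ i * Z \<omega> $ j * indicator S \<omega>)"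
proof (rule Bochner_Integration.integrable_bound[OF sq])
  have "(\<lambda>v::real^'n. v $ k) \<in> borel_measurable borel" for k
    by (intro borel_measurable_continuous_onI continuous_intros)
  then have "(\<lambda>\<omega>. Z \<omega> $ k) \<in> borel_measurable M" for k
    using Z by (rule measurable_compose[rotated])
  moreover have "(\<lambda>\<omega>. indicator S \<omega> :: real) \<in> borel_measurable M"
    using S by (simp add: borel_measurable_indicator')
  ultimately show "(\<lambda>\<omega>. Z \<omega> $ i * Z \<omega> $ j * indicator S \<omega>) \<in> borel_measurable M"
    by (intro borel_measurable_times)
  show "AE \<omega> in M. norm (Z \<omega> $ i * Z \<omega> $ j * indicator S \<omega>) \<le> norm ((norm (Z \<omega>))\<^sup>2)"
  proof (rule AE_I2)
    fix \<omega>
    have "\<bar>Z \<omega> $ i\<bar> \<le> norm (Z \<omega>)" "\<bar>Z \<omega> $ j\<bar> \<le> norm (Z \<omega>)"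
      by (simp_all add: component_le_norm_cart)
    then have "\<bar>Z \<omega> $ i * Z \<omega> $ j\<bar> \<le> norm (Z \<omega>) * norm (Z \<omega>)"
      unfolding abs_mult by (simp add: mult_mono')
    then show "norm (Z \<omega> $ i * Z \<omega> $ j * indicator S \<omega>) \<le> norm ((norm (Z \<omega>))\<^sup>2)"
      by (auto simp: indicator_def power2_eq_square)
  qed
qed

lemma inner_second_moment_on:
  fixes Z :: "'a \<Rightarrow> real^'n"
  assumes Z: "Z \<in> borel_measurable M" and sq: "integrable M (\<lambda>\<omega>. (norm (Z \<omega>))\<^sup>2)"
    and S: "{\<omega>\<in>space M. \<omega> \<in> S} \<in> sets M"
  shows "integrable M (\<lambda>\<omega>. (x \<bullet> Z \<omega>) * (y \<bullet> Z \<omega>) * indicator S \<omega>)"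
    and "x \<bullet> (second_moment_on M Z S *v y) = (\<integral>\<omega>. (x \<bullet> Z \<omega>) * (y \<bullet> Z \<omega>) * indicator S \<omega> \<partial>M)"
proof -
  let ?f = "\<lambda>i j \<omega>. x $ i * y $ j * (Z \<omega> $ i * Z \<omega> $ j * indicator S \<omega>)"
  have int: "integrable M (?f i j)" for i j
    by (intro integrable_mult_right integrable_component_product_indicator[OF Z sq S])
  have expand: "(\<lambda>\<omega>. (x \<bullet> Z \<omega>) * (y \<bullet> Z \<omega>) * indicator S \<omega>) = (\<lambda>\<omega>. \<Sum>i\<in>UNIV. \<Sum>j\<in>UNIV. ?f i j \<omega>)"
    by (subst sum.swap) (auto simp: inner_vec_def sum_distrib_left sum_distrib_right mult_ac)
  show "integrable M (\<lambda>\<omega>. (x \<bullet> Z \<omega>) * (y \<bullet> Z \<omega>) * indicator S \<omega>)"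
    unfolding expand using int by auto
  have "x \<bullet> (second_moment_on M Z S *v y) = (\<Sum>i\<in>UNIV. \<Sum>j\<in>UNIV. \<integral>\<omega>. ?f i j \<omega> \<partial>M)"
    by (simp add: second_moment_on_def inner_vec_def matrix_vector_mult_def sum_distrib_left mult_ac)
  also have "\<dots> = (\<integral>\<omega>. (\<Sum>i\<in>UNIV. \<Sum>j\<in>UNIV. ?f i j \<omega>) \<partial>M)"
    using int by (simp add: Bochner_Integration.integral_sum integrable_sum)
  finally show "x \<bullet> (second_moment_on M Z S *v y) = (\<integral>\<omega>. (x \<bullet> Z \<omega>) * (y \<bullet> Z \<omega>) * indicator S \<omega> \<partial>M)"
    by (simp add: expand)
qed

lemma second_moment_on_nonneg:
  fixes Z :: "'a \<Rightarrow> real^'n"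
  assumes "Z \<in> borel_measurable M" "integrable M (\<lambda>\<omega>. (norm (Z \<omega>))\<^sup>2)"
    and "{\<omega>\<in>space M. \<omega> \<in> S} \<in> sets M"
  shows "x \<bullet> (second_moment_on M Z S *v x) \<ge> 0"
  unfolding inner_second_moment_on(2)[OF assms]
  by (rule integral_nonneg_AE) (auto simp: indicator_def)

lemma pop_grad_zero_imp_quadratic_forms_zero:
  fixes Z :: "'a \<Rightarrow> real^'n"
  assumes Z: "Z \<in> borel_measurable M" and sq: "integrable M (\<lambda>\<omega>. (norm (Z \<omega>))\<^sup>2)"
    and crit: "pop_grad M Z wstar w = 0"
  shows "(w - wstar) \<bullet> (A_pos M Z wstar w *v (w - wstar)) = 0"
    and "w \<bullet> (A_neg M Z wstar w *v w) = 0"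
proof -
  define u where "u = w - wstar"
  define P where "P = {\<omega>. w \<bullet> Z \<omega> \<ge> 0 \<and> wstar \<bullet> Z \<omega> \<ge> 0}"
  define Q where "Q = {\<omega>. w \<bullet> Z \<omega> \<ge> 0 \<and> wstar \<bullet> Z \<omega> \<le> 0}"
  have P_sets: "{\<omega>\<in>space M. \<omega> \<in> P} \<in> sets M"
    using halfspace_intersection_sets(1)[OF Z] by (simp add: P_def)
  have Q_sets: "{\<omega>\<in>space M. \<omega> \<in> Q} \<in> sets M"
    using halfspace_intersection_sets(2)[OF Z] by (simp add: Q_def)
  have A_pos_nonneg: "u \<bullet> (A_pos M Z wstar w *v u) \<ge> 0"
    unfolding A_pos_eq_second_moment_on P_def[symmetric]
    by (rule second_moment_on_nonneg[OF Z sq P_sets])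
  have A_neg_nonneg: "w \<bullet> (A_neg M Z wstar w *v w) \<ge> 0"
    unfolding A_neg_eq_second_moment_on Q_def[symmetric]
    by (rule second_moment_on_nonneg[OF Z sq Q_sets])
  have A_neg_mono: "w \<bullet> (A_neg M Z wstar w *v w) \<le> u \<bullet> (A_neg M Z wstar w *v w)"
    unfolding A_neg_eq_second_moment_on Q_def[symmetric] inner_second_moment_on(2)[OF Z sq Q_sets]
  proof (rule integral_mono[OF inner_second_moment_on(1)[OF Z sq Q_sets]
                                inner_second_moment_on(1)[OF Z sq Q_sets]])
    fix \<omega>
    have "u \<bullet> Z \<omega> = w \<bullet> Z \<omega> - wstar \<bullet> Z \<omega>" by (simp add: u_def inner_diff_left)
    then show "(w \<bullet> Z \<omega>) * (w \<bullet> Z \<omega>) * indicator Q \<omega> \<le> (u \<bullet> Z \<omega>) * (w \<bullet> Z \<omega>) * indicator Q \<omega>"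
      by (auto simp: indicator_def Q_def intro!: mult_right_mono)
  qed
  have "0 = u \<bullet> pop_grad M Z wstar w" using crit by simp
  also have "\<dots> = u \<bullet> (A_pos M Z wstar w *v u) + u \<bullet> (A_neg M Z wstar w *v w)"
    by (simp add: pop_grad_def u_def inner_add_right)
  finally have "u \<bullet> (A_pos M Z wstar w *v u) + u \<bullet> (A_neg M Z wstar w *v w) = 0" ..
  then show "(w - wstar) \<bullet> (A_pos M Z wstar w *v (w - wstar)) = 0"
    and "w \<bullet> (A_neg M Z wstar w *v w) = 0"
    using A_pos_nonneg A_neg_nonneg A_neg_mono unfolding u_def by linarith+
qed

lemma A_pos_zero_eq_A_pos_wstar: "A_pos M Z wstar 0 = A_pos M Z wstar wstar"
  by (simp add: A_pos_def)

lemma vec_angle_self: "v \<noteq> 0 \<Longrightarrow> vec_angle v v = 0"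
  by (simp add: vec_angle_def power2_norm_eq_inner[symmetric] power2_eq_square)

theorem theorem1:
  fixes M :: "'a measure" and Z :: "'a \<Rightarrow> real^'n"
    and wstar :: "real^'n" and w :: "nat \<Rightarrow> real^'n" and eta :: "nat \<Rightarrow> real"
    and wbar :: "real^'n"
  assumes "prob_space M"
    and "Z \<in> borel_measurable M"
    and "absolutely_continuous lborel (distr M borel Z)"
    and "integrable M (\<lambda>\<omega>. (norm (Z \<omega>))\<^sup>2)"
    and "wstar \<noteq> 0"
    and "\<And>v. v \<noteq> 0 \<Longrightarrow> vec_angle v wstar < pi \<Longrightarrow> pos_def (A_pos M Z wstar v)"
    and "\<And>v. v \<noteq> 0 \<Longrightarrow> vec_angle v wstar > 0 \<Longrightarrow> pos_def (A_neg M Z wstar v)"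
    and "pop_loss M Z wstar (w 0) < pop_loss M Z wstar 0"
    and "\<And>t. w (Suc t) = w t - eta t *\<^sub>R pop_grad M Z wstar (w t)"
    and "\<And>t. pop_loss M Z wstar (w (Suc t)) \<le> pop_loss M Z wstar (w t)"
    and "w \<longlonglongrightarrow> wbar"
    and "pop_grad M Z wstar wbar = 0"
  shows "wbar = wstar"
proof (rule ccontr)
  assume ne: "wbar \<noteq> wstar"
  note forms_zero = pop_grad_zero_imp_quadratic_forms_zero[OF assms(2,4,12)]
  have "pos_def (A_pos M Z wstar wbar) \<or> pos_def (A_neg M Z wstar wbar) \<and> wbar \<noteq> 0"
  proof (cases "wbar = 0")
    case True
    then show ?thesis
      using assms(5) assms(6)[of wstar] by (simp add: A_pos_zero_eq_A_pos_wstar vec_angle_self)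
  next
    case False
    then show ?thesis
      using assms(6,7)[OF False] pi_gt_zero by (cases "vec_angle wbar wstar < pi") auto
  qed
  moreover have "wbar - wstar \<noteq> 0" using ne by simp
  ultimately show False
    using forms_zero unfolding pos_def_def by fastforce
qed

end
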